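(* Let $\eta\in[0,1)$ and $\gamma>0$. Then every optimal solution of the free-payment control problem and every optimal solution of the pro-rata control problem (both described in the context) has the following properties, where $P^*(t)$, $u^*(t)$ denote the optimal payment matrices and control inputs (in the pro-rata case $P^*(t)=\mathrm{diag}(p^*(t))A$), $p^*(t)=P^*(t)\mathbf{1}$, and $\bar P^*(t)$, $\bar p^*(t)=\bar P^*(t)\mathbf{1}$, $c^*(t)=e(t)+u^*(t)$, $w^*(t)$, $B^*(t)$ are the associated sequences: 1. (Absolute debt priority rule) For all $i=1,\ldots,n$ and $t\in\{0,\ldots,T-1\}$, $$p^*_i(t)=\min\Big(\bar p_i^*(t),\; w_i^*(t)+c^*_i(t)+\sum\nolimits_{j\ne i}p_{ji}^*(t)\Big).$$ 2. (Injected liquidity is used immediately) If $u_i^*(t)>0$, then $w_i^*(t+1)=0$ and, moreover, $w_i^*(s)=0$ for all $s\leq t$. 3. If $B^*(t_* )<F(t_* )$ at some period $t_*<T-1$, then no liquidity is injected after period $t_*$: $u^*(t)=0$ for all $t>t_*$.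
   Context: Consider $n$ banks (plus a fictitious external node with zero liabilities) over discrete periods $t\in\mathcal T=\{0,\ldots,T-1\}$. $\bar P\in\mathbb R^{n\times n}$, $\bar P\geq 0$ with zero diagonal, is the initial nominal liability matrix ($\bar p_{ij}$ = amount due from $i$ to $j$), $\bar p=\bar P\mathbf{1}$, where $\mathbf 1$ is the all-ones vector. At each $t$, nodes receive external cash $e(t)\geq 0$ (given) and control injections $u(t)\geq 0$; $c(t)=e(t)+u(t)$, and $C(t)=\sum_{k=0}^t c(k)$. $P(t)\in\mathbb R^{n\times n}$ is the actual payment matrix at $t$, $p(t)=P(t)\mathbf 1$. Net worth evolves as $w(0)=0$, $w(t+1)=w(t)+c(t)+P(t)^\top\mathbf 1-P(t)\mathbf 1$, and nominal liabilities as $\bar P(0)=\bar P$, $\bar P(t+1)=\alpha(\bar P(t)-P(t))$ with interest factor $\alpha\geq 1$; $\bar p(t)=\bar P(t)\mathbf 1$. The cumulative injected cash is $B(t)=\sum_{\tau=0}^t\mathbf 1^\top u(\tau)$, and $F(t)\geq 0$ is a given nondecreasing budget sequence. The total loss is $L([P])=\sum_{t=0}^{T-1}\mathbf 1^\top(\bar P(t)-P(t))\mathbf 1$ and the cost is $J([P],[u])=(1-\eta)L([P])+\eta\,\mathbf 1^\top\bar P(T)\mathbf 1+\gamma B(T-1)$ with $\eta\in[0,1]$, $\gamma\geq 0$. The free-payment control problem is: minimize $J([P],[u])$ over sequences $[P]=(P(0),\ldots,P(T-1))$, $[u]=(u(0),\ldots,u(T-1))$ subject to $P(t)\geq 0$,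 $u(t)\geq 0$, $\sum_{k=0}^t\alpha^{t-k}P(k)\leq\alpha^t\bar P$, $C(t)+\sum_{k=0}^t(P(k)^\top-P(k))\mathbf 1\geq 0$, and $B(t)\leq F(t)$ for all $t\in\mathcal T$. The pro-rata control problem additionally imposes $P(t)=\mathrm{diag}(p(t))A$, where $A=[a_{ij}]$ with $a_{ij}=\bar p_{ij}/\bar p_i$ if $\bar p_i>0$, $a_{ii}=1$ if $\bar p_i=0$, and $a_{ij}=0$ otherwise; it is stated in terms of vectors $p(t)$: minimize $(1-\eta)L([p])+\eta\,\mathbf 1^\top\bar p(T)+\gamma B(T-1)$ with $L([p])=\sum_t\mathbf 1^\top(\bar p(t)-p(t))$, subject to $p(t)\geq 0$, $u(t)\geq 0$, $\sum_{k=0}^t\alpha^{t-k}p(k)\leq\alpha^t\bar p$, $C(t)+\sum_{k=0}^t(A^\top p(k)-p(k))\geq 0$, $B(t)\leq F(t)$ for all $t\in\mathcal T$. *)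

theory Defs
  imports Complex_Main
begin

text \<open>Nodes are the elements of a finite type 'n (banks, possibly including the
fictitious external node, which is simply a node with zero nominal liabilities).\<close>

definition cvec :: "(nat \<Rightarrow> 'n \<Rightarrow> real) \<Rightarrow> (nat \<Rightarrow> 'n \<Rightarrow> real) \<Rightarrow> nat \<Rightarrow> 'n \<Rightarrow> real" where
  "cvec e u t i = e t i + u t i"

definition Cum :: "(nat \<Rightarrow> 'n \<Rightarrow> real) \<Rightarrow> (nat \<Rightarrow> 'n \<Rightarrow> real) \<Rightarrow> nat \<Rightarrow> 'n \<Rightarrow> real" where
  "Cum e u t i = (\<Sum>k\<le>t. cvec e u k i)"

fun wseq :: "(nat \<Rightarrow> 'n \<Rightarrow> real) \<Rightarrow> (nat \<Rightarrow> 'n \<Rightarrow> 'n \<Rightarrow> real) \<Rightarrow> nat \<Rightarrow> 'n::finite \<Rightarrow> real" where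
  "wseq c P 0 i = 0"
| "wseq c P (Suc t) i = wseq c P t i + c t i + (\<Sum>j\<in>UNIV. P t j i) - (\<Sum>j\<in>UNIV. P t i j)"

fun Pbar_seq :: "real \<Rightarrow> ('n \<Rightarrow> 'n \<Rightarrow> real) \<Rightarrow> (nat \<Rightarrow> 'n \<Rightarrow> 'n \<Rightarrow> real) \<Rightarrow> nat \<Rightarrow> 'n \<Rightarrow> 'n \<Rightarrow> real" where
  "Pbar_seq \<alpha> Pb P 0 = Pb"
| "Pbar_seq \<alpha> Pb P (Suc t) = (\<lambda>i j. \<alpha> * (Pbar_seq \<alpha> Pb P t i j - P t i j))"

fun pbar_seq :: "real \<Rightarrow> ('n \<Rightarrow> real) \<Rightarrow> (nat \<Rightarrow> 'n \<Rightarrow> real) \<Rightarrow> nat \<Rightarrow> 'n \<Rightarrow> real" where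
  "pbar_seq \<alpha> pb p 0 = pb"
| "pbar_seq \<alpha> pb p (Suc t) = (\<lambda>i. \<alpha> * (pbar_seq \<alpha> pb p t i - p t i))"

definition rowsum :: "('n::finite \<Rightarrow> 'n \<Rightarrow> real) \<Rightarrow> 'n \<Rightarrow> real" where
  "rowsum M i = (\<Sum>j\<in>UNIV. M i j)"

definition Bcum :: "(nat \<Rightarrow> 'n::finite \<Rightarrow> real) \<Rightarrow> nat \<Rightarrow> real" where
  "Bcum u t = (\<Sum>\<tau>\<le>t. \<Sum>i\<in>UNIV. u \<tau> i)"

definition prorata_A :: "('n::finite \<Rightarrow> 'n \<Rightarrow> real) \<Rightarrow> 'n \<Rightarrow> 'n \<Rightarrow> real" where
  "prorata_A Pb i j =
     (if rowsum Pb i > 0 then Pb i j / rowsum Pb i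
      else if rowsum Pb i = 0 \<and> i = j then 1 else 0)"

definition free_feasible ::
  "real \<Rightarrow> ('n::finite \<Rightarrow> 'n \<Rightarrow> real) \<Rightarrow> (nat \<Rightarrow> 'n \<Rightarrow> real) \<Rightarrow> (nat \<Rightarrow> real) \<Rightarrow> nat
   \<Rightarrow> (nat \<Rightarrow> 'n \<Rightarrow> 'n \<Rightarrow> real) \<Rightarrow> (nat \<Rightarrow> 'n \<Rightarrow> real) \<Rightarrow> bool" where
  "free_feasible \<alpha> Pb e F T P u \<longleftrightarrow>
     (\<forall>t<T.
        (\<forall>i j. P t i j \<ge> 0) \<and> (\<forall>i. u t i \<ge> 0) \<and>
        (\<forall>i j. (\<Sum>k\<le>t. \<alpha> ^ (t - k) * P k i j) \<le> \<alpha> ^ t * Pb i j) \<and>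
        (\<forall>i. Cum e u t i + (\<Sum>k\<le>t. (\<Sum>j\<in>UNIV. P k j i) - (\<Sum>j\<in>UNIV. P k i j)) \<ge> 0) \<and>
        Bcum u t \<le> F t)"

definition free_cost ::
  "real \<Rightarrow> real \<Rightarrow> real \<Rightarrow> ('n::finite \<Rightarrow> 'n \<Rightarrow> real) \<Rightarrow> nat
   \<Rightarrow> (nat \<Rightarrow> 'n \<Rightarrow> 'n \<Rightarrow> real) \<Rightarrow> (nat \<Rightarrow> 'n \<Rightarrow> real) \<Rightarrow> real" where
  "free_cost \<alpha> \<eta> \<gamma> Pb T P u =
     (1 - \<eta>) * (\<Sum>t<T. \<Sum>i\<in>UNIV. \<Sum>j\<in>UNIV. Pbar_seq \<alpha> Pb P t i j - P t i j)
     + \<eta> * (\<Sum>i\<in>UNIV. \<Sum>j\<in>UNIV. Pbar_seq \<alpha> Pb P T i j)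
     + \<gamma> * (\<Sum>\<tau><T. \<Sum>i\<in>UNIV. u \<tau> i)"

definition free_optimal ::
  "real \<Rightarrow> real \<Rightarrow> real \<Rightarrow> ('n::finite \<Rightarrow> 'n \<Rightarrow> real) \<Rightarrow> (nat \<Rightarrow> 'n \<Rightarrow> real) \<Rightarrow> (nat \<Rightarrow> real) \<Rightarrow> nat
   \<Rightarrow> (nat \<Rightarrow> 'n \<Rightarrow> 'n \<Rightarrow> real) \<Rightarrow> (nat \<Rightarrow> 'n \<Rightarrow> real) \<Rightarrow> bool" where
  "free_optimal \<alpha> \<eta> \<gamma> Pb e F T P u \<longleftrightarrow>
     free_feasible \<alpha> Pb e F T P u \<and>
     (\<forall>P' u'. free_feasible \<alpha> Pb e F T P' u' \<longrightarrow>
        free_cost \<alpha> \<eta> \<gamma> Pb T P u \<le> free_cost \<alpha> \<eta> \<gamma> Pb T P' u')"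

definition pr_feasible ::
  "real \<Rightarrow> ('n::finite \<Rightarrow> 'n \<Rightarrow> real) \<Rightarrow> (nat \<Rightarrow> 'n \<Rightarrow> real) \<Rightarrow> (nat \<Rightarrow> real) \<Rightarrow> nat
   \<Rightarrow> (nat \<Rightarrow> 'n \<Rightarrow> real) \<Rightarrow> (nat \<Rightarrow> 'n \<Rightarrow> real) \<Rightarrow> bool" where
  "pr_feasible \<alpha> Pb e F T p u \<longleftrightarrow>
     (\<forall>t<T.
        (\<forall>i. p t i \<ge> 0) \<and> (\<forall>i. u t i \<ge> 0) \<and>
        (\<forall>i. (\<Sum>k\<le>t. \<alpha> ^ (t - k) * p k i) \<le> \<alpha> ^ t * rowsum Pb i) \<and>
        (\<forall>i. Cum e u t i + (\<Sum>k\<le>t. (\<Sum>j\<in>UNIV. prorata_A Pb j i * p k j) - p k i) \<ge> 0) \<and>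
        Bcum u t \<le> F t)"

definition pr_cost ::
  "real \<Rightarrow> real \<Rightarrow> real \<Rightarrow> ('n::finite \<Rightarrow> 'n \<Rightarrow> real) \<Rightarrow> nat
   \<Rightarrow> (nat \<Rightarrow> 'n \<Rightarrow> real) \<Rightarrow> (nat \<Rightarrow> 'n \<Rightarrow> real) \<Rightarrow> real" where
  "pr_cost \<alpha> \<eta> \<gamma> Pb T p u =
     (1 - \<eta>) * (\<Sum>t<T. \<Sum>i\<in>UNIV. pbar_seq \<alpha> (rowsum Pb) p t i - p t i)
     + \<eta> * (\<Sum>i\<in>UNIV. pbar_seq \<alpha> (rowsum Pb) p T i)
     + \<gamma> * (\<Sum>\<tau><T. \<Sum>i\<in>UNIV. u \<tau> i)"

definition pr_optimal ::
  "real \<Rightarrow> real \<Rightarrow> real \<Rightarrow> ('n::finite \<Rightarrow> 'n \<Rightarrow> real) \<Rightarrow> (nat \<Rightarrow> 'n \<Rightarrow> real) \<Rightarrow> (nat \<Rightarrow> real) \<Rightarrow> nat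
   \<Rightarrow> (nat \<Rightarrow> 'n \<Rightarrow> real) \<Rightarrow> (nat \<Rightarrow> 'n \<Rightarrow> real) \<Rightarrow> bool" where
  "pr_optimal \<alpha> \<eta> \<gamma> Pb e F T p u \<longleftrightarrow>
     pr_feasible \<alpha> Pb e F T p u \<and>
     (\<forall>p' u'. pr_feasible \<alpha> Pb e F T p' u' \<longrightarrow>
        pr_cost \<alpha> \<eta> \<gamma> Pb T p u \<le> pr_cost \<alpha> \<eta> \<gamma> Pb T p' u')"

text \<open>P: payment matrices, pb: nominal liability vectors pbar(t), u: control inputs.\<close>
definition optimal_properties ::
  "(nat \<Rightarrow> 'n::finite \<Rightarrow> real) \<Rightarrow> (nat \<Rightarrow> real) \<Rightarrow> nat
   \<Rightarrow> (nat \<Rightarrow> 'n \<Rightarrow> 'n \<Rightarrow> real) \<Rightarrow> (nat \<Rightarrow> 'n \<Rightarrow> real) \<Rightarrow> (nat \<Rightarrow> 'n \<Rightarrow> real) \<Rightarrow> bool" where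
  "optimal_properties e F T P pb u \<longleftrightarrow>
     (\<forall>i. \<forall>t<T. rowsum (P t) i =
         min (pb t i) (wseq (cvec e u) P t i + cvec e u t i + (\<Sum>j\<in>UNIV - {i}. P t j i))) \<and>
     (\<forall>i. \<forall>t<T. u t i > 0 \<longrightarrow>
         wseq (cvec e u) P (Suc t) i = 0 \<and> (\<forall>s\<le>t. wseq (cvec e u) P s i = 0)) \<and>
     (\<forall>ts. ts < T - 1 \<and> Bcum u ts < F ts \<longrightarrow> (\<forall>t. ts < t \<and> t < T \<longrightarrow> (\<forall>i. u t i = 0)))"

end

theory Submission
  imports Defs
begin

text \<open>Both problems are instances of one model in which every liability has a debtor and
  splits each payment among the creditors in fixed shares. Each property is proved by turning
  a violation into a feasible solution of strictly smaller cost.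
  If a node keeps cash while still in debt, it pays a little earlier: \<open>\<epsilon>\<close> more now and
  \<open>\<alpha> \<epsilon>\<close> less in the next period, which leaves all later nominal liabilities unchanged and
  lowers the loss. Its creditors without spare cash pass the extra receipts on in proportion to
  their own payments; the amounts passed on solve a nonnegative linear fixed-point equation,
  and the cash ends up at nodes free of debt, whose net worth can only grow afterwards.
  Injected cash that is not spent at once can be withdrawn, saving \<open>\<gamma>\<close> per unit. Finally,
  unused budget at \<open>t\<^sub>*\<close> allows the first later injection to be moved one period earlier,
  which finances the same earlier payment.\<close>

lemma nonneg_fixpoint_below_supersolution:
  fixes b z :: "'a \<Rightarrow> real" and M :: "'a \<Rightarrow> 'a \<Rightarrow> real"
  assumes "finite S"
    and M_nonneg: "\<And>v w. v \<in> S \<Longrightarrow> w \<in> S \<Longrightarrow> M v w \<ge> 0"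
    and b_nonneg: "\<And>w. w \<in> S \<Longrightarrow> b w \<ge> 0"
    and z_nonneg: "\<And>w. w \<in> S \<Longrightarrow> z w \<ge> 0"
    and supersolution: "\<And>w. w \<in> S \<Longrightarrow> b w + (\<Sum>v\<in>S. z v * M v w) \<le> z w"
  obtains H where "\<And>w. w \<in> S \<Longrightarrow> 0 \<le> H w \<and> H w \<le> z w"
    and "\<And>w. w \<in> S \<Longrightarrow> H w = b w + (\<Sum>v\<in>S. H v * M v w)"
proof -
  define \<Phi> where "\<Phi> H w = b w + (\<Sum>v\<in>S. H v * M v w)" for H :: "'a \<Rightarrow> real" and w
  have \<Phi>_mono: "\<Phi> H w \<le> \<Phi> H' w" if "\<And>v. v \<in> S \<Longrightarrow> H v \<le> H' v" and "w \<in> S" for H H' w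
    unfolding \<Phi>_def using that M_nonneg by (auto intro!: sum_mono mult_right_mono)
  define Hs where "Hs k = (\<Phi> ^^ k) (\<lambda>_. 0)" for k
  have Hs_0: "Hs 0 = (\<lambda>_. 0)" and Hs_Suc: "Hs (Suc k) = \<Phi> (Hs k)" for k
    unfolding Hs_def by simp_all
  have Hs_inc: "Hs k w \<le> Hs (Suc k) w" if "w \<in> S" for k w
    using that
  proof (induction k arbitrary: w)
    case 0
    then show ?case using b_nonneg by (simp add: Hs_0 Hs_Suc \<Phi>_def)
  next
    case (Suc k)
    then show ?case using \<Phi>_mono[of "Hs k" "Hs (Suc k)" w] by (simp only: Hs_Suc)
  qed
  have Hs_bounds: "0 \<le> Hs k w \<and> Hs k w \<le> z w" if "w \<in> S" for k w
    using that
  proof (induction k arbitrary: w)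
    case 0
    then show ?case using z_nonneg by (simp add: Hs_0)
  next
    case (Suc k)
    have "\<Phi> (Hs k) w \<le> \<Phi> z w" using Suc by (intro \<Phi>_mono) auto
    also have "\<dots> \<le> z w" using supersolution Suc.prems unfolding \<Phi>_def by simp
    finally show ?case using Suc Hs_inc[of w k] by (fastforce simp: Hs_Suc)
  qed
  define H where "H w = (SUP k. Hs k w)" for w
  have Hs_tendsto: "(\<lambda>k. Hs k w) \<longlonglongrightarrow> H w" if "w \<in> S" for w
    unfolding H_def using that Hs_inc Hs_bounds
    by (intro LIMSEQ_incseq_SUP incseq_SucI bdd_aboveI2[where M = "z w"]) auto
  show ?thesis
  proof
    fix w assume "w \<in> S"
    show "0 \<le> H w \<and> H w \<le> z w"
      using Hs_bounds \<open>w \<in> S\<close>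
      by (auto intro: LIMSEQ_le_const[OF Hs_tendsto] LIMSEQ_le_const2[OF Hs_tendsto])
    have "(\<lambda>k. Hs (Suc k) w) \<longlonglongrightarrow> H w"
      using Hs_tendsto[OF \<open>w \<in> S\<close>] by (rule LIMSEQ_Suc)
    moreover have "(\<lambda>k. Hs (Suc k) w) \<longlonglongrightarrow> \<Phi> H w"
      unfolding Hs_Suc \<Phi>_def by (intro tendsto_intros Hs_tendsto)
    ultimately show "H w = b w + (\<Sum>v\<in>S. H v * M v w)"
      unfolding \<Phi>_def by (rule LIMSEQ_unique)
  qed
qed

lemma eventually_mult_le_at_right_0:
  assumes "P \<Longrightarrow> 0 < c"
  shows "\<forall>\<^sub>F \<epsilon> in at_right 0. P \<longrightarrow> \<epsilon> * a \<le> (c::real)"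
proof (cases P)
  case True
  have "((\<lambda>\<epsilon>. \<epsilon> * a) \<longlongrightarrow> 0) (at_right 0)"
    by (intro tendsto_mult_left_zero tendsto_ident_at)
  then have "\<forall>\<^sub>F \<epsilon> in at_right 0. \<epsilon> * a < c"
    using assms True by (intro order_tendstoD(2))
  then show ?thesis by (auto elim: eventually_mono)
qed simp

lemma Bcum_eq_if_no_injection:
  assumes "s \<le> t" and "\<And>k v. s < k \<Longrightarrow> k \<le> t \<Longrightarrow> u k v = 0"
  shows "Bcum u t = Bcum u s"
  using assms(1)
proof (induction t rule: dec_induct)
  case (step k)
  then show ?case using assms(2)[of "Suc k"] by (simp add: Bcum_def)
qed simp

text \<open>Liability \<open>y\<close> is owed by node \<open>debtor y\<close>, has initial nominal value \<open>cap y\<close>, and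
  node \<open>v\<close> receives the fraction \<open>share y v\<close> of every payment \<open>x t y\<close> on it. In the notation of
  the paper, \<open>nominal x t\<close> is \<open>Pbar(t)\<close> and \<open>residual x t\<close> is \<open>Pbar(t) - P(t)\<close>.\<close>
locale payment_network =
  fixes \<alpha> \<eta> \<gamma> :: real
    and debtor :: "'y::finite \<Rightarrow> 'n::finite"
    and share :: "'y \<Rightarrow> 'n \<Rightarrow> real"
    and cap :: "'y \<Rightarrow> real"
    and e :: "nat \<Rightarrow> 'n \<Rightarrow> real"
    and F :: "nat \<Rightarrow> real"
    and T :: nat
  assumes eta_nonneg: "0 \<le> \<eta>" and eta_less_1: "\<eta> < 1" and gamma_pos: "\<gamma> > 0"
    and alpha_ge_1: "\<alpha> \<ge> 1"
    and share_nonneg: "\<And>y v. share y v \<ge> 0"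
    and e_nonneg: "\<And>t v. t < T \<Longrightarrow> e t v \<ge> 0"
    and F_mono: "\<And>s t. s \<le> t \<Longrightarrow> t < T \<Longrightarrow> F s \<le> F t"
begin

definition paid :: "(nat \<Rightarrow> 'y \<Rightarrow> real) \<Rightarrow> nat \<Rightarrow> 'n \<Rightarrow> real" where
  "paid x t v = (\<Sum>y | debtor y = v. x t y)"

definition flow :: "(nat \<Rightarrow> 'y \<Rightarrow> real) \<Rightarrow> nat \<Rightarrow> 'n \<Rightarrow> 'n \<Rightarrow> real" where
  "flow x t v w = (\<Sum>y | debtor y = v. share y w * x t y)"

definition received :: "(nat \<Rightarrow> 'y \<Rightarrow> real) \<Rightarrow> nat \<Rightarrow> 'n \<Rightarrow> real" where
  "received x t w = (\<Sum>y\<in>UNIV. share y w * x t y)"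

definition net_worth :: "(nat \<Rightarrow> 'y \<Rightarrow> real) \<Rightarrow> (nat \<Rightarrow> 'n \<Rightarrow> real) \<Rightarrow> nat \<Rightarrow> 'n \<Rightarrow> real" where
  "net_worth x u t v = (\<Sum>k<t. cvec e u k v + received x k v - paid x k v)"

definition nominal :: "(nat \<Rightarrow> 'y \<Rightarrow> real) \<Rightarrow> nat \<Rightarrow> 'y \<Rightarrow> real" where
  "nominal x t y = \<alpha> ^ t * cap y - (\<Sum>k<t. \<alpha> ^ (t - k) * x k y)"

definition residual :: "(nat \<Rightarrow> 'y \<Rightarrow> real) \<Rightarrow> nat \<Rightarrow> 'y \<Rightarrow> real" where
  "residual x t y = \<alpha> ^ t * cap y - (\<Sum>k\<le>t. \<alpha> ^ (t - k) * x k y)"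

definition node_nominal :: "(nat \<Rightarrow> 'y \<Rightarrow> real) \<Rightarrow> nat \<Rightarrow> 'n \<Rightarrow> real" where
  "node_nominal x t v = (\<Sum>y | debtor y = v. nominal x t y)"

definition node_residual :: "(nat \<Rightarrow> 'y \<Rightarrow> real) \<Rightarrow> nat \<Rightarrow> 'n \<Rightarrow> real" where
  "node_residual x t v = (\<Sum>y | debtor y = v. residual x t y)"

definition feasible :: "(nat \<Rightarrow> 'y \<Rightarrow> real) \<Rightarrow> (nat \<Rightarrow> 'n \<Rightarrow> real) \<Rightarrow> bool" where
  "feasible x u \<longleftrightarrow> (\<forall>t<T. (\<forall>y. x t y \<ge> 0) \<and> (\<forall>v. u t v \<ge> 0) \<and> (\<forall>y. residual x t y \<ge> 0)
      \<and> (\<forall>v. net_worth x u (Suc t) v \<ge> 0) \<and> Bcum u t \<le> F t)"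

definition cost :: "(nat \<Rightarrow> 'y \<Rightarrow> real) \<Rightarrow> (nat \<Rightarrow> 'n \<Rightarrow> real) \<Rightarrow> real" where
  "cost x u = (1 - \<eta>) * (\<Sum>t<T. \<Sum>y\<in>UNIV. residual x t y) + \<eta> * (\<Sum>y\<in>UNIV. nominal x T y)
      + \<gamma> * (\<Sum>t<T. \<Sum>v\<in>UNIV. u t v)"

definition optimal :: "(nat \<Rightarrow> 'y \<Rightarrow> real) \<Rightarrow> (nat \<Rightarrow> 'n \<Rightarrow> real) \<Rightarrow> bool" where
  "optimal x u \<longleftrightarrow> feasible x u \<and> (\<forall>x' u'. feasible x' u' \<longrightarrow> cost x u \<le> cost x' u')"

definition hoarding :: "(nat \<Rightarrow> 'y \<Rightarrow> real) \<Rightarrow> (nat \<Rightarrow> 'n \<Rightarrow> real) \<Rightarrow> nat \<Rightarrow> 'n \<Rightarrow> bool" where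
  "hoarding x u t v \<longleftrightarrow> node_residual x t v > 0 \<and> net_worth x u (Suc t) v > 0"

definition settled_with_surplus ::
  "(nat \<Rightarrow> 'y \<Rightarrow> real) \<Rightarrow> (nat \<Rightarrow> 'n \<Rightarrow> real) \<Rightarrow> nat \<Rightarrow> 'n \<Rightarrow> bool" where
  "settled_with_surplus x u t v \<longleftrightarrow> node_residual x t v = 0 \<and> net_worth x u (Suc t) v > 0"

lemma optimal_not_improvable:
  assumes "optimal x u" and "feasible x' u'" shows "\<not> cost x' u' < cost x u"
  using assms unfolding optimal_def by (simp add: not_less)

lemma optimal_if_equivalent_problem:
  assumes feasible_iff: "\<And>P u. feasible' P u \<longleftrightarrow> feasible (f P) u"
    and cost_eq: "\<And>P u. cost' P u = cost (f P) u" and "surj f"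
    and "feasible' P u" and "\<And>P' u'. feasible' P' u' \<Longrightarrow> cost' P u \<le> cost' P' u'"
  shows "optimal (f P) u"
  unfolding optimal_def using assms by (metis surjD)

lemma nominal_Suc: "nominal x (Suc t) y = \<alpha> * residual x t y"
proof -
  have "(\<Sum>k<Suc t. \<alpha> ^ (Suc t - k) * x k y) = \<alpha> * (\<Sum>k\<le>t. \<alpha> ^ (t - k) * x k y)"
    unfolding lessThan_Suc_atMost sum_distrib_left
    by (rule sum.cong) (auto simp: Suc_diff_le)
  then show ?thesis unfolding nominal_def residual_def by (simp add: algebra_simps)
qed

lemma nominal_minus_payment: "nominal x t y - x t y = residual x t y"
  unfolding nominal_def residual_def by (simp add: lessThan_Suc_atMost[symmetric])

lemma net_worth_0 [simp]: "net_worth x u 0 v = 0"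
  unfolding net_worth_def by simp

lemma net_worth_Suc:
  "net_worth x u (Suc t) v = net_worth x u t v + cvec e u t v + received x t v - paid x t v"
  unfolding net_worth_def by simp

lemma net_worth_Suc_eq_Cum:
  "net_worth x u (Suc t) v = Cum e u t v + (\<Sum>k\<le>t. received x k v - paid x k v)"
  unfolding net_worth_def Cum_def lessThan_Suc_atMost by (simp add: sum.distrib[symmetric] add_diff_eq)

lemma nominal_0: "nominal x 0 y = cap y"
  unfolding nominal_def by simp

lemma nominal_recurrence: "nominal x (Suc t) y = \<alpha> * (nominal x t y - x t y)"
  by (simp add: nominal_Suc nominal_minus_payment)

lemma node_residual_eq: "node_residual x t v = node_nominal x t v - paid x t v"
  unfolding node_residual_def node_nominal_def paid_def
  by (simp add: sum_subtractf nominal_minus_payment[symmetric])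

lemma node_nominal_Suc: "node_nominal x (Suc t) v = \<alpha> * node_residual x t v"
  unfolding node_residual_def node_nominal_def by (simp add: nominal_Suc sum_distrib_left)

lemma sum_by_debtor: "(\<Sum>y\<in>UNIV. f y) = (\<Sum>v\<in>UNIV. \<Sum>y | debtor y = v. f y)"
  using sum.group[of UNIV UNIV debtor f] by simp

lemma received_eq_sum_flow: "received x t w = (\<Sum>v\<in>UNIV. flow x t v w)"
  unfolding received_def flow_def by (rule sum_by_debtor)

text \<open>Paying \<open>\<epsilon> g\<close> earlier by one period and \<open>\<alpha> \<epsilon> g\<close> less in the next one leaves
  every nominal liability from period \<open>\<tau> + 2\<close> on unchanged.\<close>
definition shift_payment ::
  "(nat \<Rightarrow> 'y \<Rightarrow> real) \<Rightarrow> nat \<Rightarrow> real \<Rightarrow> ('y \<Rightarrow> real) \<Rightarrow> nat \<Rightarrow> 'y \<Rightarrow> real" where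
  "shift_payment x \<tau> \<epsilon> g = (\<lambda>k y. x k y + (if k = \<tau> then \<epsilon> * g y else 0)
      - (if k = Suc \<tau> then \<alpha> * \<epsilon> * g y else 0))"

definition shift_injection ::
  "(nat \<Rightarrow> 'n \<Rightarrow> real) \<Rightarrow> nat \<Rightarrow> 'n \<Rightarrow> real \<Rightarrow> nat \<Rightarrow> 'n \<Rightarrow> real" where
  "shift_injection u \<tau> i s = (\<lambda>k v. u k v + (if v = i \<and> k = \<tau> then s else 0)
      - (if v = i \<and> k = Suc \<tau> then s else 0))"

definition net_gain :: "('y \<Rightarrow> real) \<Rightarrow> 'n \<Rightarrow> real" where
  "net_gain g v = (\<Sum>y\<in>UNIV. share y v * g y) - (\<Sum>y | debtor y = v. g y)"

lemma residual_shift_payment: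
  "residual (shift_payment x \<tau> \<epsilon> g) t y = residual x t y - (if t = \<tau> then \<epsilon> * g y else 0)"
proof -
  have "(\<Sum>k\<le>t. \<alpha> ^ (t - k) * shift_payment x \<tau> \<epsilon> g k y) = (\<Sum>k\<le>t. \<alpha> ^ (t - k) * x k y)
      + (if \<tau> \<le> t then \<alpha> ^ (t - \<tau>) * (\<epsilon> * g y) else 0)
      - (if Suc \<tau> \<le> t then \<alpha> ^ (t - Suc \<tau>) * (\<alpha> * \<epsilon> * g y) else 0)"
    unfolding shift_payment_def
    by (simp add: algebra_simps sum.distrib sum_subtractf if_distrib[of "(*) _"] cong: if_cong)
  also have "\<dots> = (\<Sum>k\<le>t. \<alpha> ^ (t - k) * x k y) + (if t = \<tau> then \<epsilon> * g y else 0)"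
    by (auto simp: Suc_diff_Suc[symmetric] simp del: Suc_diff_Suc)
  finally show ?thesis unfolding residual_def by simp
qed

lemma final_nominal_shift_payment:
  assumes "\<tau> < T"
  shows "nominal (shift_payment x \<tau> \<epsilon> g) T y
    = nominal x T y - (if Suc \<tau> = T then \<alpha> * \<epsilon> * g y else 0)"
proof -
  obtain t where "T = Suc t" using assms by (cases T) auto
  then show ?thesis
    by (simp add: nominal_Suc residual_shift_payment right_diff_distrib)
qed

lemma net_worth_shift:
  "net_worth (shift_payment x \<tau> \<epsilon> g) (shift_injection u \<tau> i s) r v = net_worth x u r v
    + (if \<tau> < r then (if v = i then s else 0) + \<epsilon> * net_gain g v else 0)
    - (if Suc \<tau> < r then (if v = i then s else 0) + \<alpha> * \<epsilon> * net_gain g v else 0)"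
proof -
  define d where "d = (if v = i then s else 0) + \<epsilon> * net_gain g v"
  define d' where "d' = (if v = i then s else 0) + \<alpha> * \<epsilon> * net_gain g v"
  have "cvec e (shift_injection u \<tau> i s) k v + received (shift_payment x \<tau> \<epsilon> g) k v
        - paid (shift_payment x \<tau> \<epsilon> g) k v
      = cvec e u k v + received x k v - paid x k v + (if k = \<tau> then d else 0)
        - (if k = Suc \<tau> then d' else 0)" for k
    unfolding cvec_def shift_injection_def received_def paid_def shift_payment_def d_def d'_def
      net_gain_def
    by (auto simp: algebra_simps sum.distrib sum_subtractf sum_distrib_left)
  then show ?thesis
    unfolding net_worth_def d_def d'_def by (simp add: sum.distrib sum_subtractf)
qed

lemma sum_shift_injection:
  "(\<Sum>v\<in>UNIV. shift_injection u \<tau> i s k v)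
    = (\<Sum>v\<in>UNIV. u k v) + (if k = \<tau> then s else 0) - (if k = Suc \<tau> then s else 0)"
  unfolding shift_injection_def by (auto simp: sum.distrib sum_subtractf sum.delta)

lemma Bcum_shift_injection:
  "Bcum (shift_injection u \<tau> i s) r = Bcum u r + (if r = \<tau> then s else 0)"
  unfolding Bcum_def sum_shift_injection by (simp add: sum.distrib sum_subtractf)

lemma total_shift_injection:
  assumes "Suc \<tau> < T"
  shows "(\<Sum>k<T. \<Sum>v\<in>UNIV. shift_injection u \<tau> i s k v) = (\<Sum>k<T. \<Sum>v\<in>UNIV. u k v)"
  unfolding sum_shift_injection using assms by (simp add: sum.distrib sum_subtractf)

lemma cost_shift_less:
  assumes "\<tau> < T" and "\<epsilon> > 0" and g_nonneg: "\<And>y. g y \<ge> 0" and g_sum_pos: "(\<Sum>y\<in>UNIV. g y) > 0"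
    and "s \<noteq> 0 \<Longrightarrow> Suc \<tau> < T"
  shows "cost (shift_payment x \<tau> \<epsilon> g) (shift_injection u \<tau> i s) < cost x u"
proof -
  let ?x = "shift_payment x \<tau> \<epsilon> g" and ?u = "shift_injection u \<tau> i s"
  have "(\<Sum>y\<in>UNIV. residual ?x t y)
      = (\<Sum>y\<in>UNIV. residual x t y) - (if t = \<tau> then \<epsilon> * (\<Sum>y\<in>UNIV. g y) else 0)" for t
    unfolding residual_shift_payment by (simp add: sum_subtractf sum_distrib_left)
  then have "(\<Sum>t<T. \<Sum>y\<in>UNIV. residual ?x t y)
      = (\<Sum>t<T. \<Sum>y\<in>UNIV. residual x t y) - \<epsilon> * (\<Sum>y\<in>UNIV. g y)"
    using \<open>\<tau> < T\<close> by (simp add: sum_subtractf)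
  moreover have "(\<Sum>y\<in>UNIV. nominal ?x T y) \<le> (\<Sum>y\<in>UNIV. nominal x T y)"
    unfolding final_nominal_shift_payment[OF \<open>\<tau> < T\<close>]
    using alpha_ge_1 \<open>\<epsilon> > 0\<close> g_nonneg by (intro sum_mono) auto
  moreover have "(\<Sum>k<T. \<Sum>v\<in>UNIV. ?u k v) = (\<Sum>k<T. \<Sum>v\<in>UNIV. u k v)"
    using total_shift_injection assms(5) by (cases "s = 0") (auto simp: shift_injection_def)
  moreover have "(1 - \<eta>) * (\<epsilon> * (\<Sum>y\<in>UNIV. g y)) > 0"
    using eta_less_1 \<open>\<epsilon> > 0\<close> g_sum_pos by simp
  ultimately show ?thesis
    unfolding cost_def using eta_nonneg
    by (smt (verit, best) mult_left_mono right_diff_distrib)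
qed

definition relays :: "(nat \<Rightarrow> 'y \<Rightarrow> real) \<Rightarrow> (nat \<Rightarrow> 'n \<Rightarrow> real) \<Rightarrow> nat \<Rightarrow> 'n \<Rightarrow> 'n set" where
  "relays x u t i = {v. paid x t v > 0 \<and> \<not> settled_with_surplus x u t v \<and> v \<noteq> i}"

definition payment_share :: "(nat \<Rightarrow> 'y \<Rightarrow> real) \<Rightarrow> nat \<Rightarrow> 'n \<Rightarrow> 'n \<Rightarrow> real" where
  "payment_share x t v w = flow x t v w / paid x t v"

definition scale_payments :: "(nat \<Rightarrow> 'y \<Rightarrow> real) \<Rightarrow> nat \<Rightarrow> ('n \<Rightarrow> real) \<Rightarrow> 'y \<Rightarrow> real" where
  "scale_payments x t h y = h (debtor y) * x t y / paid x t (debtor y)"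

lemma paid_scale_payments:
  assumes "paid x t v = 0 \<Longrightarrow> h v = 0"
  shows "(\<Sum>y | debtor y = v. scale_payments x t h y) = h v"
proof -
  have "(\<Sum>y | debtor y = v. scale_payments x t h y) = h v / paid x t v * paid x t v"
    unfolding scale_payments_def paid_def by (simp add: sum_distrib_left)
  then show ?thesis using assms by (cases "paid x t v = 0") auto
qed

lemma net_gain_scale_payments:
  assumes "\<And>v. paid x t v = 0 \<Longrightarrow> h v = 0"
  shows "net_gain (scale_payments x t h) w = (\<Sum>v\<in>UNIV. h v * payment_share x t v w) - h w"
proof -
  have "(\<Sum>y\<in>UNIV. share y w * scale_payments x t h y) = (\<Sum>v\<in>UNIV. h v * payment_share x t v w)"
    unfolding sum_by_debtor[of "\<lambda>y. share y w * scale_payments x t h y"]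
    by (simp add: scale_payments_def payment_share_def flow_def sum_distrib_left
        sum_divide_distrib algebra_simps)
  then show ?thesis unfolding net_gain_def using paid_scale_payments[of x t w h, OF assms] by simp
qed

context
  fixes x u assumes feasible: "feasible x u"
begin

lemma payment_nonneg: "t < T \<Longrightarrow> x t y \<ge> 0"
  using feasible unfolding feasible_def by auto

lemma injection_nonneg: "t < T \<Longrightarrow> u t v \<ge> 0"
  using feasible unfolding feasible_def by auto

lemma residual_nonneg: "t < T \<Longrightarrow> residual x t y \<ge> 0"
  using feasible unfolding feasible_def by auto

lemma Bcum_le_F: "t < T \<Longrightarrow> Bcum u t \<le> F t"
  using feasible unfolding feasible_def by auto

lemma net_worth_nonneg: "t \<le> T \<Longrightarrow> net_worth x u t v \<ge> 0"
  using feasible unfolding feasible_def by (cases t) auto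

lemma paid_nonneg: "t < T \<Longrightarrow> paid x t v \<ge> 0"
  unfolding paid_def by (auto intro!: sum_nonneg payment_nonneg)

lemma flow_nonneg: "t < T \<Longrightarrow> flow x t v w \<ge> 0"
  unfolding flow_def by (auto intro!: sum_nonneg mult_nonneg_nonneg payment_nonneg share_nonneg)

lemma received_nonneg: "t < T \<Longrightarrow> received x t v \<ge> 0"
  unfolding received_eq_sum_flow by (auto intro!: sum_nonneg flow_nonneg)

lemma cash_nonneg: "t < T \<Longrightarrow> cvec e u t v \<ge> 0"
  unfolding cvec_def using injection_nonneg e_nonneg by (simp add: add_nonneg_nonneg)

lemma node_residual_nonneg: "t < T \<Longrightarrow> node_residual x t v \<ge> 0"
  unfolding node_residual_def by (auto intro!: sum_nonneg residual_nonneg)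

lemma payment_eq_0_if_cap_eq_0:
  assumes "t < T" and "cap y = 0"
  shows "x t y = 0"
proof -
  have terms_nonneg: "\<forall>k\<in>{..t}. 0 \<le> \<alpha> ^ (t - k) * x k y"
    using alpha_ge_1 payment_nonneg \<open>t < T\<close> by auto
  moreover have "(\<Sum>k\<le>t. \<alpha> ^ (t - k) * x k y) \<le> 0"
    using residual_nonneg[OF \<open>t < T\<close>, of y] \<open>cap y = 0\<close> unfolding residual_def by simp
  ultimately have "(\<Sum>k\<le>t. \<alpha> ^ (t - k) * x k y) = 0"
    by (meson order_antisym sum_nonneg)
  then have "\<alpha> ^ (t - t) * x t y = 0"
    using terms_nonneg by (subst (asm) sum_nonneg_eq_0_iff) auto
  then show ?thesis by simp
qed

text \<open>A node pays at most its nominal liabilities and at most its available cash, so the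
  absolute priority rule fails exactly when both bounds are slack.\<close>
lemma absolute_priority_iff_not_hoarding:
  assumes "t < T"
  shows "paid x t v = min (node_nominal x t v) (net_worth x u t v + cvec e u t v + received x t v)
     \<longleftrightarrow> \<not> hoarding x u t v"
  using node_residual_nonneg[OF assms, of v] net_worth_nonneg[of "Suc t" v] assms
  unfolding hoarding_def node_residual_eq net_worth_Suc
  by (auto simp: min_def)

lemma shift_feasible:
  assumes "\<tau> < T" and "\<epsilon> > 0" and "s \<ge> 0" and g_nonneg: "\<And>y. g y \<ge> 0"
    and residual_room: "\<And>y. \<epsilon> * g y \<le> residual x \<tau> y"
    and payment_room: "\<And>y. Suc \<tau> < T \<Longrightarrow> \<alpha> * \<epsilon> * g y \<le> x (Suc \<tau>) y"
    and injection_room: "s > 0 \<Longrightarrow> Suc \<tau> < T \<and> s \<le> u (Suc \<tau>) i \<and> Bcum u \<tau> + s \<le> F \<tau>"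
    and cash_now: "\<And>v. 0 \<le> net_worth x u (Suc \<tau>) v + (if v = i then s else 0) + \<epsilon> * net_gain g v"
    and cash_later: "\<And>v r. Suc (Suc \<tau>) \<le> r \<Longrightarrow> r \<le> T \<Longrightarrow>
      (\<alpha> - 1) * \<epsilon> * net_gain g v \<le> net_worth x u r v"
  shows "feasible (shift_payment x \<tau> \<epsilon> g) (shift_injection u \<tau> i s)"
  unfolding feasible_def
proof (intro allI impI conjI)
  fix t y assume "t < T"
  then show "shift_payment x \<tau> \<epsilon> g t y \<ge> 0"
    using payment_nonneg g_nonneg[of y] \<open>\<epsilon> > 0\<close> payment_room[of y]
    unfolding shift_payment_def by auto
next
  fix t v assume "t < T"
  then show "shift_injection u \<tau> i s t v \<ge> 0"
    using injection_nonneg \<open>s \<ge> 0\<close> injection_room unfolding shift_injection_def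
    by (cases "s > 0") auto
next
  fix t y assume "t < T"
  then show "residual (shift_payment x \<tau> \<epsilon> g) t y \<ge> 0"
    unfolding residual_shift_payment using residual_nonneg residual_room[of y] by auto
next
  fix t v assume "t < T"
  consider "Suc t \<le> \<tau>" | "t = \<tau>" | "Suc \<tau> \<le> t" by linarith
  then show "net_worth (shift_payment x \<tau> \<epsilon> g) (shift_injection u \<tau> i s) (Suc t) v \<ge> 0"
  proof cases
    case 1
    then show ?thesis using net_worth_nonneg[of "Suc t" v] \<open>t < T\<close> by (simp add: net_worth_shift)
  next
    case 2
    then show ?thesis using cash_now[of v] by (simp add: net_worth_shift add.assoc)
  next
    case 3
    then show ?thesis
      using cash_later[of "Suc t" v] \<open>t < T\<close> by (simp add: net_worth_shift algebra_simps)
  qed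
next
  fix t assume "t < T"
  then show "Bcum (shift_injection u \<tau> i s) t \<le> F t"
    using Bcum_le_F injection_room \<open>s \<ge> 0\<close> unfolding Bcum_shift_injection
    by (cases "s > 0") auto
qed

lemma withdraw_injection_improves:
  assumes "t < T" and "0 < s" and "s \<le> u t i"
    and cash_later: "\<And>r. Suc t \<le> r \<Longrightarrow> r \<le> T \<Longrightarrow> s \<le> net_worth x u r i"
  defines "u' \<equiv> \<lambda>k v. u k v - (if k = t \<and> v = i then s else 0)"
  shows "feasible x u' \<and> cost x u' < cost x u"
proof
  have total: "(\<Sum>v\<in>UNIV. u' k v) = (\<Sum>v\<in>UNIV. u k v) - (if k = t then s else 0)" for k
    unfolding u'_def by (auto simp: sum_subtractf sum.delta)
  have "net_worth x u' r v = net_worth x u r v - (if v = i \<and> t < r then s else 0)" for r v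
  proof -
    have "net_worth x u' r v = net_worth x u r v - (\<Sum>k<r. if k = t then (if v = i then s else 0) else 0)"
      unfolding net_worth_def cvec_def u'_def sum_subtractf[symmetric] by (rule sum.cong) auto
    then show ?thesis by simp
  qed
  moreover have "Bcum u' r \<le> Bcum u r" for r
    unfolding Bcum_def total using \<open>0 < s\<close> by (simp add: sum_subtractf)
  ultimately show "feasible x u'"
    unfolding feasible_def
    using payment_nonneg injection_nonneg residual_nonneg net_worth_nonneg cash_later Bcum_le_F
      \<open>0 < s\<close> \<open>s \<le> u t i\<close>
    by (fastforce simp: u'_def intro: order_trans)
  have "(\<Sum>k<T. \<Sum>v\<in>UNIV. u' k v) = (\<Sum>k<T. \<Sum>v\<in>UNIV. u k v) - s"
    using \<open>t < T\<close> by (simp add: total sum_subtractf)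
  then show "cost x u' < cost x u"
    unfolding cost_def using gamma_pos \<open>0 < s\<close> by (simp add: algebra_simps)
qed

context
  fixes t i
  assumes "t < T" and no_hoarding: "\<And>v. \<not> hoarding x u t v" and paid_i: "paid x t i > 0"
begin

lemma payment_share_nonneg: "payment_share x t v w \<ge> 0"
  unfolding payment_share_def using flow_nonneg paid_nonneg \<open>t < T\<close> by simp

lemma settled_if_surplus: "net_worth x u (Suc t) v > 0 \<Longrightarrow> settled_with_surplus x u t v"
  using no_hoarding[of v] node_residual_nonneg[OF \<open>t < T\<close>, of v]
  unfolding hoarding_def settled_with_surplus_def by auto

lemma relay_received_le_paid: "w \<in> relays x u t i \<Longrightarrow> received x t w \<le> paid x t w"
  using settled_if_surplus[of w] net_worth_nonneg[of t w] cash_nonneg[OF \<open>t < T\<close>, of w]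
    net_worth_nonneg[of "Suc t" w] \<open>t < T\<close>
  unfolding relays_def by (force simp: net_worth_Suc)

lemma relay_inflow_bound:
  assumes "\<And>v. v \<in> relays x u t i \<Longrightarrow> z v \<le> paid x t v / paid x t i"
  shows "payment_share x t i w + (\<Sum>v\<in>relays x u t i. z v * payment_share x t v w)
    \<le> received x t w / paid x t i"
proof -
  let ?S = "relays x u t i"
  have "(\<Sum>v\<in>?S. z v * payment_share x t v w) \<le> (\<Sum>v\<in>?S. flow x t v w / paid x t i)"
  proof (rule sum_mono)
    fix v assume "v \<in> ?S"
    then have "z v * payment_share x t v w \<le> paid x t v / paid x t i * payment_share x t v w"
      using assms payment_share_nonneg by (intro mult_right_mono) auto
    then show "z v * payment_share x t v w \<le> flow x t v w / paid x t i"
      using \<open>v \<in> ?S\<close> unfolding payment_share_def relays_def by simp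
  qed
  then have "payment_share x t i w + (\<Sum>v\<in>?S. z v * payment_share x t v w)
      \<le> (flow x t i w + (\<Sum>v\<in>?S. flow x t v w)) / paid x t i"
    unfolding payment_share_def by (simp add: sum_divide_distrib add_divide_distrib)
  also have "\<dots> \<le> received x t w / paid x t i"
    unfolding received_eq_sum_flow
    using sum_mono2[of UNIV "insert i ?S" "\<lambda>v. flow x t v w"] flow_nonneg[OF \<open>t < T\<close>] paid_i
    by (intro divide_right_mono) (auto simp: relays_def)
  finally show ?thesis .
qed

text \<open>\<open>H w\<close> is the extra amount relay \<open>w\<close> passes on per unit of extra payment by \<open>i\<close>.
  Since a relay receives no more than it pays, \<open>paid w / paid i\<close> is a supersolution.\<close>
lemma relay_amounts_exist:
  obtains H where "\<And>w. w \<in> relays x u t i \<Longrightarrow> 0 \<le> H w \<and> H w \<le> paid x t w / paid x t i"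
    and "\<And>w. w \<in> relays x u t i \<Longrightarrow>
      H w = payment_share x t i w + (\<Sum>v\<in>relays x u t i. H v * payment_share x t v w)"
proof (rule nonneg_fixpoint_below_supersolution)
  fix w assume "w \<in> relays x u t i"
  then show "payment_share x t i w + (\<Sum>v\<in>relays x u t i. paid x t v / paid x t i * payment_share x t v w)
      \<le> paid x t w / paid x t i"
    using relay_inflow_bound[of "\<lambda>v. paid x t v / paid x t i" w] relay_received_le_paid paid_i
    by (smt (verit) divide_right_mono)
qed (use payment_share_nonneg paid_nonneg[OF \<open>t < T\<close>] paid_i in auto)

lemma settled_if_inflow_exceeds:
  assumes i_cases: "settled_with_surplus x u t i \<or> received x t i < paid x t i"
    and H_le: "\<And>w. w \<in> relays x u t i \<Longrightarrow> H w \<le> paid x t w / paid x t i"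
    and "v \<notin> relays x u t i"
    and inflow: "payment_share x t i v + (\<Sum>w\<in>relays x u t i. H w * payment_share x t w v)
      > (if v = i then 1 else 0)"
  shows "settled_with_surplus x u t v"
proof (cases "v = i")
  case True
  then have "1 < received x t i / paid x t i"
    using inflow relay_inflow_bound[OF H_le, of i] by simp
  then show ?thesis
    using i_cases True paid_i by (simp add: field_simps)
next
  case False
  have "received x t v > 0"
  proof (rule ccontr)
    assume "\<not> received x t v > 0"
    then have "(\<Sum>w\<in>UNIV. flow x t w v) = 0"
      using received_nonneg[OF \<open>t < T\<close>, of v] unfolding received_eq_sum_flow by simp
    then have "flow x t w v = 0" for w
      using flow_nonneg[OF \<open>t < T\<close>] by (simp add: sum_nonneg_eq_0_iff)
    then show False
      using inflow False by (simp add: payment_share_def)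
  qed
  then show ?thesis
    using \<open>v \<notin> relays x u t i\<close> False paid_nonneg[OF \<open>t < T\<close>, of v] settled_if_surplus[of v]
      net_worth_nonneg[of t v] cash_nonneg[OF \<open>t < T\<close>, of v] \<open>t < T\<close>
    by (force simp: relays_def net_worth_Suc)
qed

lemma net_gain_cascade:
  fixes H :: "'n \<Rightarrow> real"
  defines "h \<equiv> \<lambda>v. if v = i then 1 else if v \<in> relays x u t i then H v else 0"
  shows "net_gain (scale_payments x t h) w
    = payment_share x t i w + (\<Sum>v\<in>relays x u t i. H v * payment_share x t v w) - h w"
proof -
  let ?S = "relays x u t i"
  have "i \<notin> ?S" by (simp add: relays_def)
  have "(\<Sum>v\<in>UNIV. h v * payment_share x t v w) = (\<Sum>v\<in>insert i ?S. h v * payment_share x t v w)"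
    by (rule sum.mono_neutral_right) (auto simp: h_def)
  also have "\<dots> = payment_share x t i w + (\<Sum>v\<in>?S. H v * payment_share x t v w)"
    using \<open>i \<notin> ?S\<close> by (simp add: h_def) (rule sum.cong, auto)
  moreover have "h v = 0" if "paid x t v = 0" for v
    using that paid_i by (auto simp: h_def relays_def)
  ultimately show ?thesis
    using net_gain_scale_payments[of x t h w] by simp
qed

text \<open>The witness \<open>g\<close>: node \<open>i\<close> raises its payments by one unit and every relay by the extra
  amount \<open>H\<close> it receives, each spread over its liabilities in proportion to its current
  payments.\<close>
lemma cascade_exists:
  assumes i_cases: "settled_with_surplus x u t i \<or> received x t i < paid x t i"
  obtains g where "\<And>y. g y \<ge> 0" and "(\<Sum>y\<in>UNIV. g y) > 0" and "\<And>y. g y > 0 \<Longrightarrow> x t y > 0"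
    and "net_gain g i \<ge> -1" and "\<And>v. v \<noteq> i \<Longrightarrow> net_gain g v \<ge> 0"
    and "\<And>v. net_gain g v > 0 \<Longrightarrow> settled_with_surplus x u t v"
proof -
  let ?S = "relays x u t i" and ?M = "payment_share x t"
  obtain H where H_bounds: "\<And>w. w \<in> ?S \<Longrightarrow> 0 \<le> H w \<and> H w \<le> paid x t w / paid x t i"
    and H_fixpoint: "\<And>w. w \<in> ?S \<Longrightarrow> H w = ?M i w + (\<Sum>v\<in>?S. H v * ?M v w)"
    using relay_amounts_exist by blast
  define h where "h = (\<lambda>v. if v = i then 1 else if v \<in> ?S then H v else 0)"
  define g where "g = scale_payments x t h"
  have gain: "net_gain g w = ?M i w + (\<Sum>v\<in>?S. H v * ?M v w) - h w" for w
    unfolding g_def h_def by (rule net_gain_cascade)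
  have inflow_nonneg: "0 \<le> ?M i w + (\<Sum>v\<in>?S. H v * ?M v w)" for w
    using payment_share_nonneg H_bounds by (auto intro!: add_nonneg_nonneg sum_nonneg)
  have "i \<notin> ?S" by (simp add: relays_def)
  show ?thesis
  proof
    show g_nonneg: "g y \<ge> 0" for y
      unfolding g_def scale_payments_def h_def
      using H_bounds payment_nonneg[OF \<open>t < T\<close>] paid_nonneg[OF \<open>t < T\<close>] by simp
    have "(1::real) = (\<Sum>y | debtor y = i. g y)"
      unfolding g_def using paid_scale_payments[of x t i h] paid_i by (simp add: h_def)
    also have "\<dots> \<le> (\<Sum>y\<in>UNIV. g y)"
      by (rule sum_mono2) (auto simp: g_nonneg)
    finally show "(\<Sum>y\<in>UNIV. g y) > 0" by simp
    show "x t y > 0" if "g y > 0" for y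
      using that payment_nonneg[OF \<open>t < T\<close>, of y]
      unfolding g_def scale_payments_def by (cases "x t y = 0") auto
    show "net_gain g i \<ge> -1"
      using inflow_nonneg[of i] by (simp add: gain h_def)
    show "net_gain g v \<ge> 0" if "v \<noteq> i" for v
      using inflow_nonneg[of v] H_fixpoint[of v] that by (simp add: gain h_def)
    show "settled_with_surplus x u t v" if "net_gain g v > 0" for v
    proof (rule settled_if_inflow_exceeds[OF i_cases])
      show "H w \<le> paid x t w / paid x t i" if "w \<in> ?S" for w
        using H_bounds[OF that] by simp
      show "v \<notin> ?S"
      proof
        assume "v \<in> ?S"
        then have "v \<noteq> i" using \<open>i \<notin> ?S\<close> by blast
        then show False using that H_fixpoint[OF \<open>v \<in> ?S\<close>] \<open>v \<in> ?S\<close> by (simp add: gain h_def)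
      qed
      then show "?M i v + (\<Sum>w\<in>?S. H w * ?M w v) > (if v = i then 1 else 0)"
        using that by (cases "v = i") (simp_all add: gain h_def)
    qed
  qed
qed

end

lemma settled_stays_settled:
  assumes "node_residual x t v = 0" and "debtor y = v" and "t + d < T"
  shows "residual x (t + d) y = 0 \<and> (0 < d \<longrightarrow> x (t + d) y = 0)"
  using assms(3)
proof (induction d)
  case 0
  have "\<forall>y\<in>{y. debtor y = v}. residual x t y = 0"
    using assms(1) unfolding node_residual_def
    by (subst (asm) sum_nonneg_eq_0_iff) (use 0 residual_nonneg in auto)
  then show ?case using assms(2) by simp
next
  case (Suc d)
  have "residual x (t + Suc d) y = \<alpha> * residual x (t + d) y - x (Suc (t + d)) y"
    using nominal_minus_payment[of x "Suc (t + d)" y] nominal_Suc[of x "t + d" y] by simp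
  then have "residual x (t + Suc d) y = - x (t + Suc d) y"
    using Suc by simp
  then show ?case
    using residual_nonneg[of "t + Suc d" y] payment_nonneg[of "t + Suc d" y] Suc.prems by simp
qed

lemma paid_after_settled:
  assumes "node_residual x t v = 0" and "t < r" and "r < T"
  shows "paid x r v = 0"
proof -
  obtain d where "r = t + d" "0 < d" using \<open>t < r\<close> by (metis less_imp_add_positive)
  then show ?thesis
    unfolding paid_def using settled_stays_settled[OF assms(1)] assms(3)
    by (auto intro!: sum.neutral)
qed

lemma net_worth_mono_after_settled:
  assumes "node_residual x t v = 0" and "Suc t \<le> r" and "r \<le> T"
  shows "net_worth x u (Suc t) v \<le> net_worth x u r v"
  using assms(2,3)
proof (induction r rule: dec_induct)
  case (step r)
  then show ?case
    using paid_after_settled[OF assms(1), of r] cash_nonneg[of r v] received_nonneg[of r v]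
    by (simp add: net_worth_Suc)
qed simp

lemma small_shift_step_exists:
  assumes "Suc \<tau> < T" and g_paid: "\<And>y. g y > 0 \<Longrightarrow> x (Suc \<tau>) y > 0"
    and gain_settled: "\<And>v. net_gain g v > 0 \<Longrightarrow> settled_with_surplus x u (Suc \<tau>) v"
    and room_i: "if inject then u (Suc \<tau>) i > 0 \<and> Bcum u \<tau> < F \<tau> else net_worth x u (Suc \<tau>) i > 0"
  obtains \<epsilon> where "0 < \<epsilon>"
    and "\<And>y. g y > 0 \<Longrightarrow> \<epsilon> * g y \<le> residual x \<tau> y \<and> \<epsilon> * (\<alpha> * g y) \<le> x (Suc \<tau>) y"
    and "\<And>v. net_gain g v > 0 \<Longrightarrow> \<epsilon> * ((\<alpha> - 1) * net_gain g v) \<le> net_worth x u (Suc (Suc \<tau>)) v"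
    and "\<not> inject \<Longrightarrow> \<epsilon> \<le> net_worth x u (Suc \<tau>) i"
    and "inject \<Longrightarrow> \<epsilon> \<le> u (Suc \<tau>) i \<and> \<epsilon> \<le> F \<tau> - Bcum u \<tau>"
proof -
  have residual_pos: "residual x \<tau> y > 0" if "g y > 0" for y
  proof -
    have "\<alpha> * residual x \<tau> y \<ge> x (Suc \<tau>) y"
      using residual_nonneg[OF \<open>Suc \<tau> < T\<close>, of y] nominal_minus_payment[of x "Suc \<tau>" y]
      by (simp add: nominal_Suc)
    then have "\<alpha> * residual x \<tau> y > 0" using g_paid[OF that] by simp
    then show ?thesis using alpha_ge_1 by (simp add: zero_less_mult_iff)
  qed
  have "\<forall>\<^sub>F \<epsilon> in at_right 0. 0 < \<epsilon>
      \<and> (\<forall>y. g y > 0 \<longrightarrow> \<epsilon> * g y \<le> residual x \<tau> y)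
      \<and> (\<forall>y. g y > 0 \<longrightarrow> \<epsilon> * (\<alpha> * g y) \<le> x (Suc \<tau>) y)
      \<and> (\<forall>v. net_gain g v > 0 \<longrightarrow>
          \<epsilon> * ((\<alpha> - 1) * net_gain g v) \<le> net_worth x u (Suc (Suc \<tau>)) v)
      \<and> (\<not> inject \<longrightarrow> \<epsilon> * 1 \<le> net_worth x u (Suc \<tau>) i)
      \<and> (inject \<longrightarrow> \<epsilon> * 1 \<le> u (Suc \<tau>) i) \<and> (inject \<longrightarrow> \<epsilon> * 1 \<le> F \<tau> - Bcum u \<tau>)"
    using room_i gain_settled residual_pos g_paid
    by (intro eventually_conj eventually_at_right_less eventually_all_finite
        eventually_mult_le_at_right_0)
      (auto simp: settled_with_surplus_def split: if_splits)
  then show ?thesis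
    using that by (auto dest!: eventually_happens'[OF trivial_limit_at_right_real])
qed

lemma small_shift_improves:
  assumes "Suc \<tau> < T"
    and g_nonneg: "\<And>y. g y \<ge> 0" and g_sum_pos: "(\<Sum>y\<in>UNIV. g y) > 0"
    and g_paid: "\<And>y. g y > 0 \<Longrightarrow> x (Suc \<tau>) y > 0"
    and gain_i: "net_gain g i \<ge> -1" and gain_others: "\<And>v. v \<noteq> i \<Longrightarrow> net_gain g v \<ge> 0"
    and gain_settled: "\<And>v. net_gain g v > 0 \<Longrightarrow> settled_with_surplus x u (Suc \<tau>) v"
    and room_i: "if inject then u (Suc \<tau>) i > 0 \<and> Bcum u \<tau> < F \<tau> else net_worth x u (Suc \<tau>) i > 0"
  shows "\<exists>x' u'. feasible x' u' \<and> cost x' u' < cost x u"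
proof -
  have "\<tau> < T" using \<open>Suc \<tau> < T\<close> by simp
  obtain \<epsilon> where "0 < \<epsilon>"
    and room_y: "\<And>y. g y > 0 \<Longrightarrow> \<epsilon> * g y \<le> residual x \<tau> y \<and> \<epsilon> * (\<alpha> * g y) \<le> x (Suc \<tau>) y"
    and room_later: "\<And>v. net_gain g v > 0 \<Longrightarrow>
      \<epsilon> * ((\<alpha> - 1) * net_gain g v) \<le> net_worth x u (Suc (Suc \<tau>)) v"
    and room_now: "\<not> inject \<Longrightarrow> \<epsilon> \<le> net_worth x u (Suc \<tau>) i"
    and room_inject: "inject \<Longrightarrow> \<epsilon> \<le> u (Suc \<tau>) i \<and> \<epsilon> \<le> F \<tau> - Bcum u \<tau>"
    using small_shift_step_exists[OF \<open>Suc \<tau> < T\<close> g_paid gain_settled room_i] by blast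
  let ?s = "if inject then \<epsilon> else 0"
  have "feasible (shift_payment x \<tau> \<epsilon> g) (shift_injection u \<tau> i ?s)"
  proof (rule shift_feasible[OF \<open>\<tau> < T\<close> \<open>0 < \<epsilon>\<close> _ g_nonneg])
    show "\<epsilon> * g y \<le> residual x \<tau> y" and "\<alpha> * \<epsilon> * g y \<le> x (Suc \<tau>) y" for y
      using room_y[of y] g_nonneg[of y] residual_nonneg[OF \<open>\<tau> < T\<close>, of y]
        payment_nonneg[OF \<open>Suc \<tau> < T\<close>, of y]
      by (cases "g y > 0"; auto simp: algebra_simps)+
    show "0 \<le> net_worth x u (Suc \<tau>) v + (if v = i then ?s else 0) + \<epsilon> * net_gain g v" for v
    proof (cases "v = i")
      case True
      have "\<epsilon> * net_gain g i \<ge> - \<epsilon>" using mult_left_mono[OF gain_i, of \<epsilon>] \<open>0 < \<epsilon>\<close> by simp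
      then show ?thesis
        using True room_now net_worth_nonneg[of "Suc \<tau>" i] \<open>\<tau> < T\<close> by auto
    next
      case False
      then show ?thesis
        using gain_others[OF False] net_worth_nonneg[of "Suc \<tau>" v] \<open>\<tau> < T\<close> \<open>0 < \<epsilon>\<close> by simp
    qed
    show "(\<alpha> - 1) * \<epsilon> * net_gain g v \<le> net_worth x u r v"
      if "Suc (Suc \<tau>) \<le> r" and "r \<le> T" for v r
    proof (cases "net_gain g v > 0")
      case True
      then have "net_worth x u (Suc (Suc \<tau>)) v \<le> net_worth x u r v"
        using gain_settled that
        by (intro net_worth_mono_after_settled) (auto simp: settled_with_surplus_def)
      then show ?thesis using room_later[OF True] by (simp add: algebra_simps)
    next
      case False
      then have "(\<alpha> - 1) * \<epsilon> * net_gain g v \<le> 0"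
        using alpha_ge_1 \<open>0 < \<epsilon>\<close> by (intro mult_nonneg_nonpos) auto
      then show ?thesis using net_worth_nonneg[OF \<open>r \<le> T\<close>, of v] by simp
    qed
  qed (use room_inject \<open>0 < \<epsilon>\<close> \<open>Suc \<tau> < T\<close> in auto)
  moreover have "cost (shift_payment x \<tau> \<epsilon> g) (shift_injection u \<tau> i ?s) < cost x u"
    using \<open>Suc \<tau> < T\<close> by (intro cost_shift_less[OF \<open>\<tau> < T\<close> \<open>0 < \<epsilon>\<close> g_nonneg g_sum_pos])
  ultimately show ?thesis by blast
qed

lemma hoarding_in_last_period_improvable:
  assumes "hoarding x u \<tau> i" and "Suc \<tau> = T"
  shows "\<exists>x' u'. feasible x' u' \<and> cost x' u' < cost x u"
proof -
  have "\<tau> < T" using assms(2) by simp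
  obtain y0 where "debtor y0 = i" and "residual x \<tau> y0 > 0"
    using \<open>hoarding x u \<tau> i\<close> unfolding hoarding_def node_residual_def
    by (metis (mono_tags, lifting) mem_Collect_eq not_le sum_nonpos)
  define g where "g y = (if y = y0 then 1 else 0 :: real)" for y
  define \<epsilon> where "\<epsilon> = min (residual x \<tau> y0) (net_worth x u (Suc \<tau>) i)"
  have "\<epsilon> > 0"
    unfolding \<epsilon>_def using \<open>residual x \<tau> y0 > 0\<close> \<open>hoarding x u \<tau> i\<close> by (simp add: hoarding_def)
  have gain: "net_gain g v = share y0 v - (if v = i then 1 else 0)" for v
    unfolding net_gain_def g_def using \<open>debtor y0 = i\<close>
    by (simp add: if_distrib[of "(*) _"] sum.delta cong: if_cong)
  have "feasible (shift_payment x \<tau> \<epsilon> g) (shift_injection u \<tau> i 0)"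
  proof (rule shift_feasible[OF \<open>\<tau> < T\<close> \<open>\<epsilon> > 0\<close>])
    show "\<epsilon> * g y \<le> residual x \<tau> y" for y
      unfolding g_def \<epsilon>_def using residual_nonneg[OF \<open>\<tau> < T\<close>, of y] by auto
    show "0 \<le> net_worth x u (Suc \<tau>) v + (if v = i then 0 else 0) + \<epsilon> * net_gain g v" for v
    proof (cases "v = i")
      case True
      have "\<epsilon> * net_gain g v \<ge> - \<epsilon>"
        using share_nonneg[of y0 v] \<open>\<epsilon> > 0\<close> True by (simp add: gain right_diff_distrib)
      moreover have "\<epsilon> \<le> net_worth x u (Suc \<tau>) v" unfolding \<epsilon>_def True by simp
      ultimately show ?thesis by simp
    next
      case False
      then show ?thesis
        using share_nonneg[of y0 v] \<open>\<epsilon> > 0\<close> net_worth_nonneg[of "Suc \<tau>" v] assms(2)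
        by (simp add: gain)
    qed
  qed (use assms(2) in \<open>auto simp: g_def\<close>)
  moreover have "cost (shift_payment x \<tau> \<epsilon> g) (shift_injection u \<tau> i 0) < cost x u"
    by (rule cost_shift_less[OF \<open>\<tau> < T\<close> \<open>\<epsilon> > 0\<close>]) (auto simp: g_def)
  ultimately show ?thesis by blast
qed

lemma hoarding_improvable_if_next_period_clean:
  assumes "Suc \<tau> < T" and "hoarding x u \<tau> i" and no_hoarding: "\<And>v. \<not> hoarding x u (Suc \<tau>) v"
  shows "\<exists>x' u'. feasible x' u' \<and> cost x' u' < cost x u"
proof -
  let ?t = "Suc \<tau>"
  have cash_i: "net_worth x u ?t i > 0" and "node_residual x \<tau> i > 0"
    using \<open>hoarding x u \<tau> i\<close> unfolding hoarding_def by auto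
  have "paid x ?t i = min (node_nominal x ?t i) (net_worth x u ?t i + cvec e u ?t i + received x ?t i)"
    using absolute_priority_iff_not_hoarding[OF \<open>?t < T\<close>] no_hoarding by blast
  moreover have "node_nominal x ?t i > 0"
    using \<open>node_residual x \<tau> i > 0\<close> alpha_ge_1 by (simp add: node_nominal_Suc)
  moreover have "net_worth x u ?t i + cvec e u ?t i + received x ?t i > 0"
    using cash_i cash_nonneg[OF \<open>?t < T\<close>, of i] received_nonneg[OF \<open>?t < T\<close>, of i] by simp
  ultimately have paid_i: "paid x ?t i > 0" by simp
  have "settled_with_surplus x u ?t i \<or> received x ?t i < paid x ?t i"
  proof (cases "net_worth x u (Suc ?t) i > 0")
    case True
    then show ?thesis
      using settled_if_surplus[OF \<open>?t < T\<close> no_hoarding paid_i] by blast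
  next
    case False
    then show ?thesis
      using cash_i cash_nonneg[OF \<open>?t < T\<close>, of i] by (simp add: net_worth_Suc)
  qed
  then obtain g where "\<And>y. g y \<ge> 0" "(\<Sum>y\<in>UNIV. g y) > 0" "\<And>y. g y > 0 \<Longrightarrow> x ?t y > 0"
    "net_gain g i \<ge> -1" "\<And>v. v \<noteq> i \<Longrightarrow> net_gain g v \<ge> 0"
    "\<And>v. net_gain g v > 0 \<Longrightarrow> settled_with_surplus x u ?t v"
    using cascade_exists[OF \<open>?t < T\<close> no_hoarding paid_i] by blast
  then show ?thesis
    using small_shift_improves[OF \<open>?t < T\<close>, of g i False] cash_i by simp
qed

lemma earlier_injection_improvable:
  assumes "Suc \<tau> < T" and no_hoarding: "\<And>v. \<not> hoarding x u (Suc \<tau>) v"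
    and "u (Suc \<tau>) i > 0" and "net_worth x u (Suc (Suc \<tau>)) i = 0" and "Bcum u \<tau> < F \<tau>"
  shows "\<exists>x' u'. feasible x' u' \<and> cost x' u' < cost x u"
proof -
  let ?t = "Suc \<tau>"
  have "received x ?t i < paid x ?t i"
    using assms(3,4) net_worth_nonneg[of ?t i] e_nonneg[OF \<open>?t < T\<close>, of i] \<open>?t < T\<close>
    by (simp add: net_worth_Suc cvec_def)
  moreover then have paid_i: "paid x ?t i > 0"
    using received_nonneg[OF \<open>?t < T\<close>, of i] by simp
  ultimately obtain g where "\<And>y. g y \<ge> 0" "(\<Sum>y\<in>UNIV. g y) > 0" "\<And>y. g y > 0 \<Longrightarrow> x ?t y > 0"
    "net_gain g i \<ge> -1" "\<And>v. v \<noteq> i \<Longrightarrow> net_gain g v \<ge> 0"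
    "\<And>v. net_gain g v > 0 \<Longrightarrow> settled_with_surplus x u ?t v"
    using cascade_exists[OF \<open>?t < T\<close> no_hoarding paid_i] by blast
  then show ?thesis
    using small_shift_improves[OF \<open>?t < T\<close>, of g i True] assms(3,5) by simp
qed

end

lemma optimal_feasible: "optimal x u \<Longrightarrow> feasible x u"
  unfolding optimal_def by simp

text \<open>If some node hoards cash, take the last period \<open>\<tau>\<close> in which this happens: the
  absolute priority rule then holds in period \<open>\<tau> + 1\<close>, which is what the cascade needs.\<close>
lemma optimal_no_hoarding:
  assumes "optimal x u" and "t < T"
  shows "\<not> hoarding x u t v"
proof
  assume "hoarding x u t v"
  define V where "V = {t. t < T \<and> (\<exists>v. hoarding x u t v)}"
  have "finite V" "V \<noteq> {}"
    unfolding V_def using \<open>t < T\<close> \<open>hoarding x u t v\<close> by auto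
  define \<tau> where "\<tau> = Max V"
  obtain i where "\<tau> < T" "hoarding x u \<tau> i"
    using Max_in[OF \<open>finite V\<close> \<open>V \<noteq> {}\<close>] unfolding \<tau>_def V_def by auto
  have no_later: "\<not> hoarding x u s w" if "\<tau> < s" "s < T" for s w
  proof
    assume "hoarding x u s w"
    then have "s \<in> V" using \<open>s < T\<close> unfolding V_def by blast
    then show False using Max_ge[OF \<open>finite V\<close>] \<open>\<tau> < s\<close> unfolding \<tau>_def by fastforce
  qed
  have feasible: "feasible x u" using assms(1) by (rule optimal_feasible)
  have "\<exists>x' u'. feasible x' u' \<and> cost x' u' < cost x u"
  proof (cases "Suc \<tau> < T")
    case True
    then show ?thesis
      using hoarding_improvable_if_next_period_clean[OF feasible True \<open>hoarding x u \<tau> i\<close>] no_later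
      by simp
  next
    case False
    then show ?thesis
      using hoarding_in_last_period_improvable[OF feasible \<open>hoarding x u \<tau> i\<close>] \<open>\<tau> < T\<close> by simp
  qed
  then show False using optimal_not_improvable[OF assms(1)] by blast
qed

lemma optimal_absolute_priority:
  assumes "optimal x u" and "t < T"
  shows "paid x t v = min (node_nominal x t v) (net_worth x u t v + cvec e u t v + received x t v)"
  using absolute_priority_iff_not_hoarding[OF optimal_feasible[OF assms(1)] assms(2)]
    optimal_no_hoarding[OF assms] by blast

text \<open>Cash left over after an injection would sit at a node without remaining debt, so the
  injection could be reduced.\<close>
lemma optimal_injection_used_immediately:
  assumes "optimal x u" and "t < T" and "u t i > 0"
  shows "net_worth x u (Suc t) i = 0 \<and> (\<forall>s\<le>t. net_worth x u s i = 0)"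
proof -
  have feasible: "feasible x u" using assms(1) by (rule optimal_feasible)
  have settled: "node_residual x s i = 0" if "s < T" and "net_worth x u (Suc s) i > 0" for s
    using optimal_no_hoarding[OF assms(1) \<open>s < T\<close>, of i] node_residual_nonneg[OF feasible \<open>s < T\<close>, of i]
      that(2) unfolding hoarding_def by simp
  have now: "net_worth x u (Suc t) i = 0"
  proof (rule ccontr)
    assume "net_worth x u (Suc t) i \<noteq> 0"
    then have "net_worth x u (Suc t) i > 0"
      using net_worth_nonneg[OF feasible, of "Suc t" i] assms(2) by simp
    define s where "s = min (u t i) (net_worth x u (Suc t) i)"
    have "0 < s" "s \<le> u t i" unfolding s_def using assms(3) \<open>net_worth x u (Suc t) i > 0\<close> by auto
    moreover have "s \<le> net_worth x u r i" if "Suc t \<le> r" "r \<le> T" for r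
      using net_worth_mono_after_settled[OF feasible settled[OF assms(2)] that]
        \<open>net_worth x u (Suc t) i > 0\<close> unfolding s_def by simp
    ultimately show False
      using withdraw_injection_improves[OF feasible assms(2)] optimal_not_improvable[OF assms(1)]
      by blast
  qed
  have "net_worth x u s i = 0" if "s \<le> t" for s
  proof (cases s)
    case (Suc s')
    show ?thesis
    proof (rule ccontr)
      assume "net_worth x u s i \<noteq> 0"
      then have "net_worth x u (Suc s') i > 0"
        using net_worth_nonneg[OF feasible, of s i] that assms(2) Suc by simp
      then show False
        using net_worth_mono_after_settled[OF feasible settled, of s' "Suc t"] now that assms(2) Suc
        by simp
    qed
  qed simp
  then show ?thesis using now by blast
qed

lemma optimal_no_injection_after_unused_budget:
  assumes "optimal x u" and "Bcum u ts < F ts" and "ts < t" and "t < T"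
  shows "u t v = 0"
proof (rule ccontr)
  have feasible: "feasible x u" using assms(1) by (rule optimal_feasible)
  assume "u t v \<noteq> 0"
  then have "u t v > 0" using injection_nonneg[OF feasible \<open>t < T\<close>, of v] by simp
  define P where "P s \<longleftrightarrow> ts < s \<and> s < T \<and> (\<exists>v. u s v > 0)" for s
  define t0 where "t0 = (LEAST s. P s)"
  have "P t0"
    unfolding t0_def using \<open>u t v > 0\<close> assms(3,4) by (intro LeastI[of P t]) (auto simp: P_def)
  then obtain \<tau> i where t0: "t0 = Suc \<tau>" "ts \<le> \<tau>" "Suc \<tau> < T" and "u (Suc \<tau>) i > 0"
    unfolding P_def by (cases t0) auto
  have "u k w = 0" if "ts < k" "k \<le> \<tau>" for k w
  proof -
    have "\<not> P k" using not_less_Least[of k P] that t0 unfolding t0_def[symmetric] by simp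
    moreover have "k < T" using that t0 by simp
    ultimately have "\<not> u k w > 0" using \<open>ts < k\<close> unfolding P_def by blast
    then show ?thesis using injection_nonneg[OF feasible \<open>k < T\<close>, of w] by simp
  qed
  then have "Bcum u \<tau> = Bcum u ts"
    using Bcum_eq_if_no_injection[OF \<open>ts \<le> \<tau>\<close>] by blast
  then have "Bcum u \<tau> < F \<tau>"
    using assms(2) F_mono[of ts \<tau>] t0 by simp
  moreover have "net_worth x u (Suc (Suc \<tau>)) i = 0"
    using optimal_injection_used_immediately[OF assms(1) \<open>Suc \<tau> < T\<close> \<open>u (Suc \<tau>) i > 0\<close>] by simp
  ultimately show False
    using earlier_injection_improvable[OF feasible \<open>Suc \<tau> < T\<close> _ \<open>u (Suc \<tau>) i > 0\<close>]
      optimal_no_hoarding[OF assms(1) \<open>Suc \<tau> < T\<close>] optimal_not_improvable[OF assms(1)] by blast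
qed

lemma optimal_properties_if_optimal:
  assumes "optimal x u"
    and paid_eq: "\<And>t i. t < T \<Longrightarrow> rowsum (P t) i = paid x t i"
    and nominal_eq: "\<And>t i. t < T \<Longrightarrow> pb t i = node_nominal x t i"
    and received_eq: "\<And>t i. t < T \<Longrightarrow> (\<Sum>j\<in>UNIV - {i}. P t j i) = received x t i"
    and net_worth_eq: "\<And>t i. wseq (cvec e u) P t i = net_worth x u t i"
  shows "optimal_properties e F T P pb u"
  unfolding optimal_properties_def net_worth_eq
  using optimal_absolute_priority[OF assms(1)] optimal_injection_used_immediately[OF assms(1)]
    optimal_no_injection_after_unused_budget[OF assms(1)] paid_eq nominal_eq received_eq
  by auto

end

lemma sum_pairs_with_fst: "(\<Sum>y | fst y = i. f y) = (\<Sum>j\<in>UNIV. f (i, j :: 'b::finite))"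
  by (rule sum.reindex_cong[of "Pair i"]) (auto simp: inj_on_def)

lemma sum_pairs: "(\<Sum>y\<in>UNIV. f y) = (\<Sum>i\<in>UNIV. \<Sum>j\<in>UNIV. f (i :: 'a::finite, j :: 'b::finite))"
  by (simp add: sum.cartesian_product UNIV_Times_UNIV[symmetric] del: UNIV_Times_UNIV)

text \<open>The free-payment problem: one liability per ordered pair of nodes, paid in full to
  its creditor.\<close>
lemma free_optimal_properties:
  fixes Pb :: "'n::finite \<Rightarrow> 'n \<Rightarrow> real"
  assumes "payment_network \<alpha> \<eta> \<gamma> (\<lambda>(y :: 'n \<times> 'n) v. if snd y = v then 1 else 0) e F T"
    and "\<forall>i. Pb i i = 0" and "free_optimal \<alpha> \<eta> \<gamma> Pb e F T P u"
  shows "optimal_properties e F T P (\<lambda>t. rowsum (Pbar_seq \<alpha> Pb P t)) u"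
proof -
  interpret payment_network \<alpha> \<eta> \<gamma> fst "\<lambda>(y :: 'n \<times> 'n) v. if snd y = v then 1 else 0" "case_prod Pb"
    e F T
    by fact
  define pairs where "pairs P' = (\<lambda>t. case_prod (P' t))" for P' :: "nat \<Rightarrow> 'n \<Rightarrow> 'n \<Rightarrow> real"
  have pairs_apply: "pairs P' t (i, j) = P' t i j" for P' t i j
    by (simp add: pairs_def)
  have paid_eq: "paid (pairs P') t i = rowsum (P' t) i" for P' t i
    unfolding paid_def pairs_def rowsum_def by (simp add: sum_pairs_with_fst)
  have received_eq: "received (pairs P') t i = (\<Sum>j\<in>UNIV. P' t j i)" for P' t i
    unfolding received_def pairs_def sum_pairs by (simp add: if_distrib[of "\<lambda>a. a * _"] cong: if_cong)
  have net_worth_eq: "wseq (cvec e u') P' t i = net_worth (pairs P') u' t i" for P' u' t i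
    by (induction t) (simp_all add: net_worth_Suc paid_eq received_eq rowsum_def)
  have nominal_eq: "nominal (pairs P') t (i, j) = Pbar_seq \<alpha> Pb P' t i j" for P' t i j
    by (induction t arbitrary: i j) (simp_all add: nominal_0 nominal_recurrence pairs_def)
  have feasible_iff: "free_feasible \<alpha> Pb e F T P' u' \<longleftrightarrow> feasible (pairs P') u'" for P' u'
    unfolding free_feasible_def feasible_def residual_def net_worth_Suc_eq_Cum paid_eq received_eq
    by (auto simp: pairs_def rowsum_def)
  have cost_eq: "free_cost \<alpha> \<eta> \<gamma> Pb T P' u' = cost (pairs P') u'" for P' u'
    unfolding free_cost_def cost_def sum_pairs
    by (simp add: nominal_eq nominal_minus_payment[symmetric] pairs_apply)
  have "surj pairs"
    by (rule surjI[of _ "\<lambda>x t. curry (x t)"]) (simp add: pairs_def)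
  then have "optimal (pairs P) u"
    using assms(3) unfolding free_optimal_def
    by (intro optimal_if_equivalent_problem[OF feasible_iff cost_eq \<open>surj pairs\<close>]) auto
  moreover have "P t i i = 0" if "t < T" for t i
    using payment_eq_0_if_cap_eq_0[OF optimal_feasible[OF \<open>optimal (pairs P) u\<close>] that, of "(i, i)"]
      assms(2) by (simp add: pairs_def)
  ultimately show ?thesis
    using net_worth_eq
    by (intro optimal_properties_if_optimal)
      (simp_all add: paid_eq received_eq sum_diff1 rowsum_def node_nominal_def sum_pairs_with_fst
        nominal_eq)
qed

lemma prorata_A_nonneg: "\<forall>i j. Pb i j \<ge> 0 \<Longrightarrow> prorata_A Pb i j \<ge> 0"
  unfolding prorata_A_def rowsum_def by (auto intro!: divide_nonneg_pos)

lemma rowsum_prorata_A: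
  assumes "\<forall>i j. Pb i j \<ge> 0"
  shows "rowsum (prorata_A Pb) i = 1"
proof (cases "rowsum Pb i > 0")
  case True
  then show ?thesis
    unfolding rowsum_def[of "prorata_A Pb"] prorata_A_def
    by (simp add: sum_divide_distrib[symmetric] rowsum_def)
next
  case False
  moreover have "rowsum Pb i \<ge> 0" unfolding rowsum_def using assms by (simp add: sum_nonneg)
  ultimately show ?thesis
    unfolding rowsum_def[of "prorata_A Pb"] prorata_A_def by simp
qed

text \<open>The pro-rata problem: one liability per node, shared among the creditors according
  to the relative liability matrix.\<close>
lemma pro_rata_optimal_properties:
  fixes Pb :: "'n::finite \<Rightarrow> 'n \<Rightarrow> real"
  assumes "payment_network \<alpha> \<eta> \<gamma> (prorata_A Pb) e F T"
    and "\<forall>i j. Pb i j \<ge> 0" and "\<forall>i. Pb i i = 0" and "pr_optimal \<alpha> \<eta> \<gamma> Pb e F T p u"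
  shows "optimal_properties e F T (\<lambda>t i j. p t i * prorata_A Pb i j) (pbar_seq \<alpha> (rowsum Pb) p) u"
proof -
  interpret payment_network \<alpha> \<eta> \<gamma> "\<lambda>i. i" "prorata_A Pb" "rowsum Pb" e F T
    by fact
  define P where "P t i j = p t i * prorata_A Pb i j" for t i j
  have paid_eq: "paid p' t i = p' t i" for p' t i
    unfolding paid_def by simp
  have rowsum_P: "rowsum (P t) i = p t i" for t i
    using rowsum_prorata_A[OF assms(2), of i] unfolding P_def rowsum_def
    by (simp add: sum_distrib_left[symmetric])
  have received_eq: "received p t i = (\<Sum>j\<in>UNIV. P t j i)" for t i
    unfolding received_def P_def by (simp add: mult.commute)
  have net_worth_eq: "wseq (cvec e u) P t i = net_worth p u t i" for t i
    by (induction t) (simp_all add: net_worth_Suc paid_eq received_eq rowsum_P[unfolded rowsum_def])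
  have nominal_eq: "pbar_seq \<alpha> (rowsum Pb) p' t i = nominal p' t i" for p' t i
    by (induction t arbitrary: i) (simp_all add: nominal_0 nominal_recurrence)
  have feasible_iff: "pr_feasible \<alpha> Pb e F T p' u' \<longleftrightarrow> feasible p' u'" for p' u'
    unfolding pr_feasible_def feasible_def residual_def net_worth_Suc_eq_Cum paid_eq received_def
    by (auto simp: mult.commute)
  have cost_eq: "pr_cost \<alpha> \<eta> \<gamma> Pb T p' u' = cost p' u'" for p' u'
    unfolding pr_cost_def cost_def by (simp add: nominal_eq nominal_minus_payment)
  have "optimal p u"
    using assms(4) unfolding optimal_def pr_optimal_def feasible_iff cost_eq .
  moreover have "P t i i = 0" if "t < T" for t i
  proof (cases "rowsum Pb i > 0")
    case True
    then show ?thesis unfolding P_def prorata_A_def using assms(3) by simp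
  next
    case False
    then have "rowsum Pb i = 0"
      using assms(2) unfolding rowsum_def by (simp add: sum_nonneg order.antisym)
    then show ?thesis
      using payment_eq_0_if_cap_eq_0[OF optimal_feasible[OF \<open>optimal p u\<close>] that] by (simp add: P_def)
  qed
  ultimately show ?thesis
    unfolding P_def[symmetric]
    by (intro optimal_properties_if_optimal)
      (simp_all add: rowsum_P paid_eq received_eq sum_diff1 node_nominal_def nominal_eq net_worth_eq)
qed

theorem lemma1:
  fixes \<alpha> \<eta> \<gamma> :: real
    and Pb :: "'n::finite \<Rightarrow> 'n \<Rightarrow> real"
    and e :: "nat \<Rightarrow> 'n \<Rightarrow> real"
    and F :: "nat \<Rightarrow> real"
    and T :: nat
  assumes "0 \<le> \<eta>" and "\<eta> < 1" and "\<gamma> > 0" and "\<alpha> \<ge> 1"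
    and "\<forall>i j. Pb i j \<ge> 0" and "\<forall>i. Pb i i = 0"
    and "\<forall>t<T. \<forall>i. e t i \<ge> 0"
    and "\<forall>t<T. F t \<ge> 0"
    and "\<forall>s t. s \<le> t \<and> t < T \<longrightarrow> F s \<le> F t"
  shows "(\<forall>P u. free_optimal \<alpha> \<eta> \<gamma> Pb e F T P u \<longrightarrow>
            optimal_properties e F T P (\<lambda>t. rowsum (Pbar_seq \<alpha> Pb P t)) u)
       \<and> (\<forall>p u. pr_optimal \<alpha> \<eta> \<gamma> Pb e F T p u \<longrightarrow>
            optimal_properties e F T (\<lambda>t i j. p t i * prorata_A Pb i j)
              (pbar_seq \<alpha> (rowsum Pb) p) u)"
proof -
  have "payment_network \<alpha> \<eta> \<gamma> (\<lambda>(y :: 'n \<times> 'n) v. if snd y = v then 1 else 0) e F T"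
    by unfold_locales (use assms in auto)
  moreover have "payment_network \<alpha> \<eta> \<gamma> (prorata_A Pb) e F T"
    by unfold_locales (use assms prorata_A_nonneg in auto)
  ultimately show ?thesis
    using free_optimal_properties pro_rata_optimal_properties assms(5,6) by blast
qed

end
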